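(* There is a function $\delta(n)$ with $n^{c}\delta(n)\to 0$ for every constant $c>0$ such that for every histogram $h$ of a distribution and every $n$, a set of $n$ independent samples drawn from that distribution is faithful (in the sense defined below) with probability at least $1-\delta(n)$.
   Context: $\log$ is the natural logarithm; $poi(\lambda,j)=e^{-\lambda}\lambda^j/j!$. The histogram $h$ of a distribution gives, for each $x\in(0,1]$, the number $h(x)$ of domain elements of probability $x$. Buckets: for an integer $k\ge 0$, the $k$th bucket of $h$ consists of the histogram entries with probabilities in $\big(\frac{k}{n\log^2 n},\frac{k+1}{n\log^2 n}\big]$; writing $h_k$ for $h$ restricted to its $k$th bucket, let $B_{poi}(j,k)=\sum_{x:h_k(x)\neq0}h(x)\,poi(nx,j)$, and for a sample set $S$ let $B_S(j,k)$ be the number of domain elements in bucket $k$ seen exactly $j$ times in $S$. A set $S$ of $n$ samples is faithful (for $h$ and $n$) if: (1) every domain element of probability $x$ appears in $S$ a number of times $j$ satisfying $|nx-j|<\max\{\log^{1.5}n,\sqrt{nx\log^{1.5}n}\}$; and (2) for every integer $j<\log^2 n$ and every $k$, $|B_{poi}(j,k)-B_S(j,k)|<n^{0.6}$. *)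

theory Defs
  imports "HOL-Probability.Probability"
begin

definition poi :: "real \<Rightarrow> nat \<Rightarrow> real" where
  "poi lam j = exp (- lam) * lam ^ j / fact j"

definition histogram :: "'a pmf \<Rightarrow> real \<Rightarrow> nat" where
  "histogram p x = card {a. pmf p a = x}"

definition in_bucket :: "nat \<Rightarrow> nat \<Rightarrow> real \<Rightarrow> bool" where
  "in_bucket n k x \<longleftrightarrow>
     real k / (real n * (ln (real n))^2) < x \<and> x \<le> real (k+1) / (real n * (ln (real n))^2)"

definition B_poi :: "'a pmf \<Rightarrow> nat \<Rightarrow> nat \<Rightarrow> nat \<Rightarrow> real" where
  "B_poi p n j k = (\<Sum>x\<in>{x. 0 < x \<and> x \<le> 1 \<and> in_bucket n k x \<and> histogram p x \<noteq> 0}.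
                      real (histogram p x) * poi (real n * x) j)"

text \<open>Sample multiset represented as a list of n i.i.d. samples.\<close>
fun samples :: "nat \<Rightarrow> 'a pmf \<Rightarrow> 'a list pmf" where
  "samples 0 p = return_pmf []"
| "samples (Suc m) p = bind_pmf p (\<lambda>x. map_pmf (\<lambda>xs. x # xs) (samples m p))"

definition B_S :: "'a pmf \<Rightarrow> nat \<Rightarrow> 'a list \<Rightarrow> nat \<Rightarrow> nat \<Rightarrow> nat" where
  "B_S p n S j k = card {a. in_bucket n k (pmf p a) \<and> count_list S a = j}"

definition faithful :: "'a pmf \<Rightarrow> nat \<Rightarrow> 'a list \<Rightarrow> bool" where
  "faithful p n S \<longleftrightarrow>
     (\<forall>a. 0 < pmf p a \<longrightarrow>
        \<bar>real n * pmf p a - real (count_list S a)\<bar>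
          < max ((ln (real n)) powr 1.5) (sqrt (real n * pmf p a * (ln (real n)) powr 1.5)))
   \<and> (\<forall>j k. real j < (ln (real n))^2 \<longrightarrow>
        \<bar>B_poi p n j k - real (B_S p n S j k)\<bar> < real n powr 0.6)"

end

(*
  Two things can make a sample unfaithful.  The count of a single element of probability x is
  Binomial(n, x); Chernoff bounds make a deviation beyond max(log^1.5 n, sqrt(n x log^1.5 n))
  superpolynomially unlikely when n x > 1/2, and an element with n x <= 1/2 reaches the count
  log^1.5 n with probability O(n x e^(-log^1.5 n)), which sums to O(n e^(-log^1.5 n)) over the
  support.  The bucket count B_S(j, k) changes by at most 2 when one sample is replaced, so
  McDiarmid's inequality keeps it within n^0.6 / 2 of its mean except with probability
  exp(-Omega(n^0.2)).  That mean is a sum of binomial probabilities, which differs from B_poi(j, k)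
  by at most n^0.6 / 2: the Poisson approximation error is O(x (log^4 n + n^0.55)) for each of the
  elements of probability x <= n^-0.45, and there are at most n^0.45 heavier ones.  Only the
  O(log^2 n) values of j and O(n log^2 n) nonempty buckets matter, so a union bound gives a
  failure probability that is n^-omega(1).
*)

theory Submission
  imports Defs "HOL-Real_Asymp.Real_Asymp"
begin

section \<open>Integrals over i.i.d. samples and McDiarmid's inequality\<close>

lemma finite_set_pmf_samples: "finite (set_pmf p) \<Longrightarrow> finite (set_pmf (samples n p))"
  by (induction n) auto

lemma integral_bind_pmf_finite:
  fixes f :: "'b \<Rightarrow> real"
  assumes M: "finite (set_pmf M)" and N: "\<And>x. x \<in> set_pmf M \<Longrightarrow> finite (set_pmf (N x))"
  shows "(\<integral>y. f y \<partial>bind_pmf M N) = (\<integral>x. (\<integral>y. f y \<partial>N x) \<partial>M)"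
proof -
  define Y where "Y = (\<Union>x\<in>set_pmf M. set_pmf (N x))"
  have Y: "finite Y"
    unfolding Y_def using M N by blast
  have "(\<integral>y. f y \<partial>bind_pmf M N) = (\<Sum>y\<in>Y. f y * pmf (bind_pmf M N) y)"
    by (rule integral_measure_pmf_real[OF Y]) (auto simp: Y_def)
  also have "\<dots> = (\<integral>x. (\<Sum>y\<in>Y. f y * pmf (N x) y) \<partial>M)"
    by (simp add: pmf_bind integral_sum[symmetric] integrable_measure_pmf_finite[OF M])
  also have "\<dots> = (\<integral>x. (\<integral>y. f y \<partial>N x) \<partial>M)"
    by (intro integral_cong_AE AE_pmfI integral_measure_pmf_real[OF Y, symmetric])
       (auto simp: Y_def)
  finally show ?thesis .
qed

lemma integral_samples_Suc:
  fixes f :: "'a list \<Rightarrow> real"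
  assumes "finite (set_pmf p)"
  shows "(\<integral>S. f S \<partial>samples (Suc n) p) = (\<integral>x. (\<integral>S. f (x # S) \<partial>samples n p) \<partial>p)"
  using assms by (simp add: integral_bind_pmf_finite finite_set_pmf_samples)

lemma measure_pmf_Markov_inequality:
  fixes f :: "'a \<Rightarrow> real"
  assumes "finite (set_pmf M)" "\<And>x. 0 \<le> f x" "0 < t"
  shows "measure_pmf.prob M {x. t \<le> f x} \<le> (\<integral>x. f x \<partial>M) / t"
  using integral_Markov_inequality_measure[of M f UNIV t] assms
  by (auto intro: integrable_measure_pmf_finite)

lemma Hoeffdings_lemma_pmf:
  fixes g :: "'a \<Rightarrow> real"
  assumes p: "finite (set_pmf p)" and l: "0 < l"
    and range: "\<And>x y. x \<in> set_pmf p \<Longrightarrow> y \<in> set_pmf p \<Longrightarrow> g x - g y \<le> c"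
  shows "(\<integral>x. exp (l * (g x - (\<integral>y. g y \<partial>p))) \<partial>p) \<le> exp (l\<^sup>2 * c\<^sup>2 / 8)"
proof -
  define a where "a = Min (g ` set_pmf p)"
  have "a \<in> g ` set_pmf p"
    unfolding a_def using p set_pmf_not_empty by (intro Min_in) auto
  then obtain y where y: "y \<in> set_pmf p" "a = g y"
    by blast
  have "g x \<in> {a..a + c}" if "x \<in> set_pmf p" for x
  proof -
    have "a \<le> g x"
      unfolding a_def using p that by simp
    moreover have "g x - g y \<le> c"
      using range[OF that y(1)] .
    ultimately show ?thesis
      using y(2) by simp
  qed
  then interpret interval_bounded_random_variable "measure_pmf p" g a "a + c"
    by unfold_locales (simp_all add: AE_pmfI)
  have "ennreal (\<integral>x. exp (l * (g x - (\<integral>y. g y \<partial>p))) \<partial>p)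
      = (\<integral>\<^sup>+x. exp (l * (g x - (\<integral>y. g y \<partial>p))) \<partial>p)"
    by (intro nn_integral_eq_integral[symmetric] integrable_measure_pmf_finite p) auto
  also have "\<dots> \<le> ennreal (exp (l\<^sup>2 * (a + c - a)\<^sup>2 / 8))"
    by (rule Hoeffdings_lemma_nn_integral[OF l])
  finally show ?thesis
    by simp
qed

definition bounded_differences :: "real \<Rightarrow> ('a list \<Rightarrow> real) \<Rightarrow> bool" where
  "bounded_differences c f \<longleftrightarrow> (\<forall>us v w ws. \<bar>f (us @ v # ws) - f (us @ w # ws)\<bar> \<le> c)"

lemma bounded_differences_Cons:
  "bounded_differences c f \<Longrightarrow> bounded_differences c (\<lambda>S. f (x # S))"
  unfolding bounded_differences_def by (metis append_Cons)

lemma bounded_differences_uminus: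
  "bounded_differences c f \<Longrightarrow> bounded_differences c (\<lambda>S. - f S)"
  unfolding bounded_differences_def by (metis abs_minus_commute minus_diff_eq minus_diff_minus)

lemma integral_Cons_diff_le:
  fixes f :: "'a list \<Rightarrow> real"
  assumes M: "finite (set_pmf M)" and f: "bounded_differences c f"
  shows "(\<integral>S. f (x # S) \<partial>M) - (\<integral>S. f (y # S) \<partial>M) \<le> c"
proof -
  have "\<bar>f ([] @ x # S) - f ([] @ y # S)\<bar> \<le> c" for S
    using f unfolding bounded_differences_def by blast
  then have "(\<integral>S. f (x # S) - f (y # S) \<partial>M) \<le> c"
    by (intro measure_pmf.integral_le_const integrable_measure_pmf_finite[OF M] AE_I2)
       (simp add: abs_le_iff)
  moreover have "(\<integral>S. f (x # S) - f (y # S) \<partial>M) = (\<integral>S. f (x # S) \<partial>M) - (\<integral>S. f (y # S) \<partial>M)"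
    by (rule Bochner_Integration.integral_diff) (simp_all add: integrable_measure_pmf_finite[OF M])
  ultimately show ?thesis
    by linarith
qed

text \<open>Condition on the first sample: by \<open>integral_Cons_diff_le\<close> the conditional expectation
  ranges over an interval of length \<open>c\<close>, so Hoeffding's lemma bounds the first factor and
  induction the rest.\<close>

lemma exp_moment_samples_le:
  fixes f :: "'a list \<Rightarrow> real"
  assumes p: "finite (set_pmf p)" and l: "0 < l" and f: "bounded_differences c f"
  shows "(\<integral>S. exp (l * (f S - (\<integral>T. f T \<partial>samples n p))) \<partial>samples n p)
           \<le> exp (l\<^sup>2 * c\<^sup>2 * real n / 8)"
  using f
proof (induction n arbitrary: f)
  case 0
  then show ?case by simp
next
  case (Suc n)
  define M where "M = samples n p"
  have M: "finite (set_pmf M)"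
    using p by (simp add: M_def finite_set_pmf_samples)
  define g where "g x = (\<integral>S. f (x # S) \<partial>M)" for x
  define E where "E = (\<integral>x. g x \<partial>p)"
  have E: "(\<integral>T. f T \<partial>samples (Suc n) p) = E"
    unfolding E_def g_def M_def by (rule integral_samples_Suc[OF p])
  have g_diff: "g x - g y \<le> c" for x y
    unfolding g_def by (rule integral_Cons_diff_le[OF M Suc.prems])
  have inner: "(\<integral>S. exp (l * (f (x # S) - E)) \<partial>M)
                 \<le> exp (l * (g x - E)) * exp (l\<^sup>2 * c\<^sup>2 * real n / 8)" for x
  proof -
    have "exp (l * (f (x # S) - E)) = exp (l * (g x - E)) * exp (l * (f (x # S) - g x))" for S
      by (simp add: mult_exp_exp algebra_simps)
    then have "(\<integral>S. exp (l * (f (x # S) - E)) \<partial>M)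
        = exp (l * (g x - E)) * (\<integral>S. exp (l * (f (x # S) - g x)) \<partial>M)"
      by simp
    also have "\<dots> \<le> exp (l * (g x - E)) * exp (l\<^sup>2 * c\<^sup>2 * real n / 8)"
      using Suc.IH[OF bounded_differences_Cons[OF Suc.prems]]
      unfolding g_def M_def by (intro mult_left_mono) auto
    finally show ?thesis .
  qed
  have "(\<integral>S. exp (l * (f S - (\<integral>T. f T \<partial>samples (Suc n) p))) \<partial>samples (Suc n) p)
      = (\<integral>x. (\<integral>S. exp (l * (f (x # S) - E)) \<partial>M) \<partial>p)"
    unfolding E M_def by (rule integral_samples_Suc[OF p])
  also have "\<dots> \<le> (\<integral>x. exp (l * (g x - E)) * exp (l\<^sup>2 * c\<^sup>2 * real n / 8) \<partial>p)"
    by (intro integral_mono integrable_measure_pmf_finite[OF p] inner)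
  also have "\<dots> = (\<integral>x. exp (l * (g x - E)) \<partial>p) * exp (l\<^sup>2 * c\<^sup>2 * real n / 8)"
    by simp
  also have "\<dots> \<le> exp (l\<^sup>2 * c\<^sup>2 / 8) * exp (l\<^sup>2 * c\<^sup>2 * real n / 8)"
    unfolding E_def by (rule mult_right_mono[OF Hoeffdings_lemma_pmf[OF p l g_diff]]) simp
  also have "\<dots> = exp (l\<^sup>2 * c\<^sup>2 * real (Suc n) / 8)"
    unfolding mult_exp_exp by (rule arg_cong[where f = exp]) (simp add: field_simps)
  finally show ?case .
qed

lemma McDiarmid_ineq_ge:
  fixes f :: "'a list \<Rightarrow> real"
  assumes p: "finite (set_pmf p)" and f: "bounded_differences c f"
    and "0 < c" "0 < n" "0 < t"
  shows "measure_pmf.prob (samples n p) {S. t \<le> f S - (\<integral>T. f T \<partial>samples n p)}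
           \<le> exp (-2 * t\<^sup>2 / (real n * c\<^sup>2))"
proof -
  define E where "E = (\<integral>T. f T \<partial>samples n p)"
  define l where "l = 4 * t / (real n * c\<^sup>2)"
  have l: "0 < l"
    using assms by (simp add: l_def)
  have "{S. t \<le> f S - E} = {S. exp (l * t) \<le> exp (l * (f S - E))}"
    using l by auto
  then have "measure_pmf.prob (samples n p) {S. t \<le> f S - E}
               \<le> (\<integral>S. exp (l * (f S - E)) \<partial>samples n p) / exp (l * t)"
    using p by (simp only:) (rule measure_pmf_Markov_inequality, auto simp: finite_set_pmf_samples)
  also have "\<dots> \<le> exp (l\<^sup>2 * c\<^sup>2 * real n / 8) / exp (l * t)"
    unfolding E_def by (intro divide_right_mono exp_moment_samples_le p l f) auto
  also have "\<dots> = exp (-2 * t\<^sup>2 / (real n * c\<^sup>2))"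
    using assms by (simp add: l_def flip: exp_diff) (simp add: field_simps power2_eq_square)
  finally show ?thesis
    unfolding E_def .
qed

lemma McDiarmid_ineq_abs_ge:
  fixes f :: "'a list \<Rightarrow> real"
  assumes p: "finite (set_pmf p)" and f: "bounded_differences c f"
    and "0 < c" "0 < n" "0 < t"
  shows "measure_pmf.prob (samples n p) {S. t \<le> \<bar>f S - (\<integral>T. f T \<partial>samples n p)\<bar>}
           \<le> 2 * exp (-2 * t\<^sup>2 / (real n * c\<^sup>2))"
proof -
  let ?P = "measure_pmf.prob (samples n p)" and ?E = "\<lambda>f. \<integral>T. f T \<partial>samples n p"
  have "{S. t \<le> \<bar>f S - ?E f\<bar>} = {S. t \<le> f S - ?E f} \<union> {S. t \<le> - f S - ?E (\<lambda>S. - f S)}"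
    by auto
  then have "?P {S. t \<le> \<bar>f S - ?E f\<bar>} \<le> ?P {S. t \<le> f S - ?E f} + ?P {S. t \<le> - f S - ?E (\<lambda>S. - f S)}"
    by (simp add: measure_Un_le)
  also have "\<dots> \<le> exp (-2 * t\<^sup>2 / (real n * c\<^sup>2)) + exp (-2 * t\<^sup>2 / (real n * c\<^sup>2))"
    by (intro add_mono McDiarmid_ineq_ge p f bounded_differences_uminus assms)
  finally show ?thesis
    by simp
qed

section \<open>Concentration of the count of one element\<close>

lemma map_pmf_eq_bernoulli_pmf: "map_pmf (\<lambda>x. x = a) p = bernoulli_pmf (pmf p a)"
proof (rule pmf_eqI)
  fix b :: bool
  have "(\<lambda>x. x = a) -` {b} = (if b then {a} else UNIV - {a})"
    by auto
  then show "pmf (map_pmf (\<lambda>x. x = a) p) b = pmf (bernoulli_pmf (pmf p a)) b"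
    using measure_pmf.prob_compl[of "{a}" p] by (simp add: pmf_map measure_pmf_single pmf_le_1)
qed

lemma map_pmf_count_list_samples: "map_pmf (\<lambda>S. count_list S a) (samples n p) = binomial_pmf n (pmf p a)"
proof (induction n)
  case 0
  then show ?case
    by (simp add: binomial_pmf_0 pmf_le_1)
next
  case (Suc n)
  have "map_pmf (\<lambda>S. count_list S a) (samples (Suc n) p)
      = bind_pmf p (\<lambda>x. map_pmf (\<lambda>k. (if x = a then 1 else 0) + k)
                              (map_pmf (\<lambda>S. count_list S a) (samples n p)))"
    by (auto simp: map_bind_pmf pmf.map_comp o_def intro!: bind_pmf_cong map_pmf_cong)
  also have "\<dots> = bind_pmf (map_pmf (\<lambda>x. x = a) p)
                    (\<lambda>b. map_pmf (\<lambda>k. (if b then 1 else 0) + k) (binomial_pmf n (pmf p a)))"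
    by (simp add: bind_map_pmf Suc.IH)
  also have "\<dots> = binomial_pmf (Suc n) (pmf p a)"
    by (simp add: map_pmf_eq_bernoulli_pmf binomial_pmf_Suc pmf_le_1 map_pmf_def)
  finally show ?case .
qed

lemma prob_count_list_eq:
  "measure_pmf.prob (samples n p) {S. count_list S a = j}
     = real (n choose j) * pmf p a ^ j * (1 - pmf p a) ^ (n - j)"
proof -
  have "measure_pmf.prob (samples n p) {S. count_list S a = j}
      = pmf (map_pmf (\<lambda>S. count_list S a) (samples n p)) j"
    by (simp add: pmf_map vimage_def)
  then show ?thesis
    by (simp add: map_pmf_count_list_samples pmf_le_1)
qed

lemma integral_exp_count_list:
  "(\<integral>S. exp (s * real (count_list S a)) \<partial>samples n p) = (1 + pmf p a * (exp s - 1)) ^ n"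
proof -
  let ?x = "pmf p a"
  have "(\<integral>S. exp (s * real (count_list S a)) \<partial>samples n p)
      = (\<integral>k. exp (s * real k) \<partial>binomial_pmf n ?x)"
    by (simp flip: map_pmf_count_list_samples)
  also have "\<dots> = (\<Sum>k\<le>n. real (n choose k) * (?x * exp s) ^ k * (1 - ?x) ^ (n - k))"
    by (simp add: expectation_binomial_pmf' pmf_le_1 power_mult_distrib mult_ac
             flip: exp_of_nat_mult)
  also have "\<dots> = (?x * exp s + (1 - ?x)) ^ n"
    by (rule binomial_ring[symmetric])
  also have "\<dots> = (1 + ?x * (exp s - 1)) ^ n"
    by (simp add: algebra_simps)
  finally show ?thesis .
qed

lemma one_plus_power_le_exp:
  assumes "0 \<le> x" "x \<le> 1"
  shows "(1 + x * (exp s - 1)) ^ n \<le> exp (real n * x * (exp s - 1))"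
proof -
  have "0 \<le> 1 + x * (exp s - 1)"
    using assms mult_left_mono[of "-1" "exp s - 1" x] by simp
  then have "(1 + x * (exp s - 1)) ^ n \<le> exp (x * (exp s - 1)) ^ n"
    by (intro power_mono) (simp_all add: add.commute)
  then show ?thesis
    by (simp add: mult_ac flip: exp_of_nat_mult)
qed

lemma prob_count_list_Chernoff:
  assumes "finite (set_pmf p)"
  shows "measure_pmf.prob (samples n p) {S. r \<le> s * real (count_list S a)}
           \<le> exp (real n * pmf p a * (exp s - 1) - r)"
proof -
  have "{S. r \<le> s * real (count_list S a)} = {S. exp r \<le> exp (s * real (count_list S a))}"
    by auto
  then have "measure_pmf.prob (samples n p) {S. r \<le> s * real (count_list S a)}
               \<le> (\<integral>S. exp (s * real (count_list S a)) \<partial>samples n p) / exp r"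
    using assms by (simp only:) (rule measure_pmf_Markov_inequality, auto simp: finite_set_pmf_samples)
  also have "\<dots> \<le> exp (real n * pmf p a * (exp s - 1)) / exp r"
    by (simp add: integral_exp_count_list one_plus_power_le_exp pmf_le_1 divide_right_mono)
  finally show ?thesis
    by (simp add: exp_diff)
qed

lemma exp_minus_le_quadratic:
  fixes l :: real
  assumes "0 \<le> l"
  shows "exp (- l) \<le> 1 - l + l\<^sup>2"
proof -
  have "exp (- l) = 1 / exp l"
    by (simp add: exp_minus field_simps)
  also have "\<dots> \<le> 1 / (1 + l)"
    using assms by (intro divide_left_mono) (auto simp: add_pos_nonneg)
  also have "\<dots> \<le> 1 - l + l\<^sup>2"
    using assms by (simp add: field_simps power2_eq_square)
  finally show ?thesis .
qed

lemma prob_count_list_deviation: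
  assumes p: "finite (set_pmf p)" and l: "0 < l" "l \<le> 1" and \<mu>: "\<mu> = real n * pmf p a"
  shows "measure_pmf.prob (samples n p) {S. M \<le> \<bar>\<mu> - real (count_list S a)\<bar>}
           \<le> 2 * exp (\<mu> * l\<^sup>2 - l * M)"
proof -
  have \<mu>_nonneg: "0 \<le> \<mu>"
    by (simp add: \<mu>)
  let ?P = "measure_pmf.prob (samples n p)" and ?c = "\<lambda>S. real (count_list S a)"
  have "?P {S. l * (\<mu> + M) \<le> l * ?c S} \<le> exp (\<mu> * (exp l - 1 - l) - l * M)"
    using prob_count_list_Chernoff[OF p, where r = "l * (\<mu> + M)" and s = l]
    by (simp add: \<mu> algebra_simps)
  also have "\<dots> \<le> exp (\<mu> * l\<^sup>2 - l * M)"
    using exp_bound[of l] l \<mu>_nonneg by (simp add: mult_left_mono)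
  finally have upper: "?P {S. l * (\<mu> + M) \<le> l * ?c S} \<le> exp (\<mu> * l\<^sup>2 - l * M)" .
  have "?P {S. - l * (\<mu> - M) \<le> - l * ?c S} \<le> exp (\<mu> * (exp (- l) - 1 + l) - l * M)"
    using prob_count_list_Chernoff[OF p, where r = "- l * (\<mu> - M)" and s = "- l"]
    by (simp add: \<mu> algebra_simps)
  also have "\<dots> \<le> exp (\<mu> * l\<^sup>2 - l * M)"
    using exp_minus_le_quadratic[of l] l \<mu>_nonneg by (simp add: mult_left_mono)
  finally have lower: "?P {S. - l * (\<mu> - M) \<le> - l * ?c S} \<le> exp (\<mu> * l\<^sup>2 - l * M)" .
  have "{S. M \<le> \<bar>\<mu> - ?c S\<bar>} = {S. l * (\<mu> + M) \<le> l * ?c S} \<union> {S. - l * (\<mu> - M) \<le> - l * ?c S}"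
    using l by (auto simp: abs_if)
  then have "?P {S. M \<le> \<bar>\<mu> - ?c S\<bar>}
               \<le> ?P {S. l * (\<mu> + M) \<le> l * ?c S} + ?P {S. - l * (\<mu> - M) \<le> - l * ?c S}"
    by (simp add: measure_Un_le)
  then show ?thesis
    using upper lower by simp
qed

text \<open>The Chernoff parameter is \<open>l = M / (2 \<mu>)\<close>, capped at \<open>1/2\<close>.\<close>

lemma prob_count_list_deviation_ge:
  assumes p: "finite (set_pmf p)" and \<mu>: "\<mu> = real n * pmf p a" "0 < \<mu>"
    and M: "0 < M" "L \<le> M" "\<mu> * L \<le> M\<^sup>2"
  shows "measure_pmf.prob (samples n p) {S. M \<le> \<bar>\<mu> - real (count_list S a)\<bar>} \<le> 2 * exp (- L / 4)"
proof -
  obtain l where l: "0 < l" "l \<le> 1" "\<mu> * l\<^sup>2 - l * M \<le> - L / 4"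
  proof (cases "M \<le> \<mu>")
    case True
    have "\<mu> * (M / (2 * \<mu>))\<^sup>2 - M / (2 * \<mu>) * M = - M\<^sup>2 / (4 * \<mu>)"
      using \<mu> by (simp add: field_simps power2_eq_square)
    also have "\<dots> \<le> - L / 4"
      using \<mu> M by (simp add: field_simps)
    finally show thesis
      using True \<mu> M by (intro that[of "M / (2 * \<mu>)"]) (auto simp: field_simps)
  next
    case False
    then show thesis
      using M by (intro that[of "1/2"]) (auto simp: power2_eq_square)
  qed
  then have "exp (\<mu> * l\<^sup>2 - l * M) \<le> exp (- L / 4)"
    by simp
  then show ?thesis
    using prob_count_list_deviation[OF p l(1,2) \<mu>(1), of M] by linarith
qed

lemma prob_count_list_ge_rare:
  assumes p: "finite (set_pmf p)" and rare: "real n * pmf p a \<le> 1/2" and L: "0 < L"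
  shows "measure_pmf.prob (samples n p) {S. L \<le> real (count_list S a)}
           \<le> 4 * (real n * pmf p a) / (exp L - 1)"
proof -
  define y where "y = real n * pmf p a * (exp 1 - 1)"
  have "exp 1 - 1 \<le> (2::real)"
    using exp_le by simp
  then have y: "0 \<le> y" "y \<le> 2 * (real n * pmf p a)"
    unfolding y_def using mult_left_mono[of "exp 1 - 1" 2 "real n * pmf p a"] by simp_all
  have y1: "y \<le> 1"
    using y rare by linarith
  have "(\<integral>S. exp (real (count_list S a)) \<partial>samples n p) = (1 + pmf p a * (exp 1 - 1)) ^ n"
    using integral_exp_count_list[where s = 1] by simp
  then have "(\<integral>S. exp (real (count_list S a)) - 1 \<partial>samples n p) = (1 + pmf p a * (exp 1 - 1)) ^ n - 1"
    using p by (simp add: integrable_measure_pmf_finite finite_set_pmf_samples)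
  also have "\<dots> \<le> exp y - 1"
    using one_plus_power_le_exp[of "pmf p a" 1 n] by (simp add: y_def pmf_le_1 mult_ac)
  also have "\<dots> \<le> 2 * y"
    using exp_bound[OF y(1) y1] mult_left_le[OF y1 y(1)] by (simp add: power2_eq_square)
  finally have moment: "(\<integral>S. exp (real (count_list S a)) - 1 \<partial>samples n p) \<le> 2 * y" .
  have "{S. L \<le> real (count_list S a)} = {S. exp L - 1 \<le> exp (real (count_list S a)) - 1}"
    by auto
  then have "measure_pmf.prob (samples n p) {S. L \<le> real (count_list S a)}
      \<le> (\<integral>S. exp (real (count_list S a)) - 1 \<partial>samples n p) / (exp L - 1)"
    using p L by (simp only:) (rule measure_pmf_Markov_inequality, auto simp: finite_set_pmf_samples)
  also have "\<dots> \<le> 2 * y / (exp L - 1)"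
    using moment L by (simp add: divide_right_mono)
  also have "\<dots> \<le> 4 * (real n * pmf p a) / (exp L - 1)"
    using y L by (intro divide_right_mono) auto
  finally show ?thesis .
qed

section \<open>Poisson approximation of binomial probabilities\<close>

lemma poi_nonneg: "0 \<le> y \<Longrightarrow> 0 \<le> poi y j"
  by (simp add: poi_def)

lemma poi_le_1:
  assumes "0 \<le> y"
  shows "poi y j \<le> 1"
proof (cases "y = 0")
  case True
  then show ?thesis
    by (simp add: poi_def power_0_left)
next
  case False
  then have "poi y j = pmf (poisson_pmf y) j"
    using assms by (simp add: poi_def field_simps)
  then show ?thesis
    by (simp add: pmf_le_1)
qed

lemma poi_Suc_le:
  assumes "0 \<le> y"
  shows "poi y (Suc j) \<le> y"
proof -
  have "poi y (Suc j) = y / Suc j * poi y j"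
    by (simp add: poi_def field_simps)
  also have "\<dots> \<le> y * 1"
    using assms poi_le_1[OF assms, of j] poi_nonneg[OF assms, of j]
    by (intro mult_mono) (auto simp: field_simps)
  finally show ?thesis
    by simp
qed

lemma fact_mult_binomial_le: "fact j * real (n choose j) \<le> real n ^ j"
proof -
  have "real ((n choose j) * fact j) \<le> real (n ^ j)"
    using binomial_fact_pow by (simp only: of_nat_le_iff)
  then show ?thesis
    by (simp add: mult.commute)
qed

lemma fact_mult_binomial_ge:
  assumes "j \<le> n"
  shows "real n ^ j * (1 - real j ^ 2 / real n) \<le> fact j * real (n choose j)"
proof (cases "n = 0")
  case True
  then show ?thesis
    using assms by simp
next
  case False
  have "fact j * real (n choose j) = (\<Prod>i<j. real n - real i)"
    by (simp add: binomial_gbinomial gbinomial_mult_fact atLeast0LessThan)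
  also have "\<dots> = (\<Prod>i<j. real n * (1 - real i / real n))"
    using False by (intro prod.cong) (auto simp: field_simps)
  also have "\<dots> = real n ^ j * (\<Prod>i<j. 1 - real i / real n)"
    by (simp add: prod.distrib)
  finally have eq: "fact j * real (n choose j) = real n ^ j * (\<Prod>i<j. 1 - real i / real n)" .
  have "1 - real j ^ 2 / real n \<le> 1 - (\<Sum>i<j. real i / real n)"
  proof -
    have "(\<Sum>i<j. real i / real n) \<le> (\<Sum>i<j. real j / real n)"
      by (intro sum_mono divide_right_mono) auto
    then show ?thesis
      by (simp add: power2_eq_square)
  qed
  also have "\<dots> \<le> (\<Prod>i<j. 1 - real i / real n)"
    using assms by (intro Weierstrass_prod_ineq) auto
  finally show ?thesis
    unfolding eq by (intro mult_left_mono) auto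
qed

lemma power_div_fact_minus_binomial_bounds:
  assumes "j \<le> n" "0 < n" "0 \<le> x"
  defines "q \<equiv> (real n * x) ^ j / fact j"
  shows "0 \<le> q - real (n choose j) * x ^ j"
    and "q - real (n choose j) * x ^ j \<le> real j ^ 2 / real n * q"
proof -
  have x: "0 \<le> x ^ j / fact j"
    using assms by simp
  have "real (n choose j) * x ^ j = fact j * real (n choose j) * (x ^ j / fact j)"
    by simp
  moreover have "q = real n ^ j * (x ^ j / fact j)"
    by (simp add: q_def power_mult_distrib)
  ultimately show "0 \<le> q - real (n choose j) * x ^ j"
    and "q - real (n choose j) * x ^ j \<le> real j ^ 2 / real n * q"
    using mult_right_mono[OF fact_mult_binomial_le x, of j n]
      mult_right_mono[OF fact_mult_binomial_ge[OF assms(1)] x]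
    by (simp_all add: algebra_simps)
qed

lemma one_minus_power_exp_bounds:
  fixes x :: real
  assumes "0 \<le> x" "x \<le> 1"
  shows "(1 - x) ^ m \<le> exp (- (real m * x))"
    and "exp (- (real m * x)) - (1 - x) ^ m \<le> real m * x ^ 2 * exp (- (real m * x))"
proof -
  have "(1 - x) ^ m \<le> exp (- x) ^ m"
    using assms exp_minus_ge[of x] by (intro power_mono) auto
  then show "(1 - x) ^ m \<le> exp (- (real m * x))"
    by (simp add: exp_of_nat_mult[symmetric])
  have "exp (- x) * (1 + x) \<le> 1"
    using exp_ge_add_one_self[of x] by (simp add: exp_minus field_simps)
  then have "exp (- x) * (1 - x ^ 2) \<le> 1 - x"
    using mult_right_mono[of "exp (- x) * (1 + x)" 1 "1 - x"] assms
    by (simp add: power2_eq_square algebra_simps)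
  then have "(exp (- x) * (1 - x ^ 2)) ^ m \<le> (1 - x) ^ m"
    using assms by (intro power_mono) (auto simp: power2_eq_square mult_le_one)
  moreover have "exp (- (real m * x)) * (1 - real m * x ^ 2) \<le> (exp (- x) * (1 - x ^ 2)) ^ m"
    using Bernoulli_inequality[of "- (x ^ 2)" m] assms
    by (simp add: power_mult_distrib mult_left_mono power2_eq_square mult_le_one
             flip: exp_of_nat_mult)
  ultimately show "exp (- (real m * x)) - (1 - x) ^ m \<le> real m * x ^ 2 * exp (- (real m * x))"
    by (simp add: algebra_simps)
qed

lemma power_div_fact_mult_exp:
  assumes "j \<le> n"
  shows "(real n * x) ^ j / fact j * exp (- (real (n - j) * x)) = poi (real n * x) j * exp (real j * x)"
proof -
  have "exp (- (real (n - j) * x)) = exp (- (real n * x)) * exp (real j * x)"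
    using assms by (simp add: of_nat_diff mult_exp_exp algebra_simps)
  then show ?thesis
    by (simp add: poi_def)
qed

lemma binomial_coefficient_error_le:
  assumes n: "0 < n" "j \<le> n" and x: "0 \<le> x" "x \<le> 1" "real j * x \<le> 1"
  shows "((real n * x) ^ j / fact j - real (n choose j) * x ^ j) * (1 - x) ^ (n - j)
           \<le> 3 * real j ^ 2 * x"
proof -
  let ?q = "(real n * x) ^ j / fact j" and ?P = "poi (real n * x) j"
  have "(?q - real (n choose j) * x ^ j) * (1 - x) ^ (n - j)
      \<le> real j ^ 2 / real n * ?q * exp (- (real (n - j) * x))"
    using power_div_fact_minus_binomial_bounds[OF n(2,1) x(1)] one_minus_power_exp_bounds(1)[OF x(1,2)] x
    by (intro mult_mono) auto
  also have "\<dots> = real j ^ 2 / real n * ?P * exp (real j * x)"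
    by (simp only: mult.assoc power_div_fact_mult_exp[OF n(2)])
  also have "\<dots> \<le> real j ^ 2 / real n * ?P * 3"
    using exp_le x(3) x by (intro mult_left_mono) (auto simp: poi_nonneg intro: order_trans)
  also have "\<dots> = real j ^ 2 * ?P * 3 / real n"
    by simp
  also have "\<dots> \<le> real j ^ 2 * (real n * x) * 3 / real n"
  proof (intro divide_right_mono mult_right_mono)
    show "real j ^ 2 * ?P \<le> real j ^ 2 * (real n * x)"
    proof (cases j)
      case (Suc i)
      then show ?thesis
        using x by (intro mult_left_mono) (simp_all add: poi_Suc_le)
    qed simp
  qed simp_all
  also have "\<dots> = 3 * real j ^ 2 * x"
    using n by simp
  finally show ?thesis .
qed

lemma power_div_fact_exp_error_le:
  assumes n: "j \<le> n" and x: "0 \<le> x" "x \<le> 1" "real j * x \<le> 1"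
  shows "(real n * x) ^ j / fact j * (exp (- (real (n - j) * x)) - (1 - x) ^ (n - j))
           \<le> 3 * real n * x ^ 2"
proof -
  let ?q = "(real n * x) ^ j / fact j" and ?P = "poi (real n * x) j"
  have "?q * (exp (- (real (n - j) * x)) - (1 - x) ^ (n - j))
      \<le> ?q * (real (n - j) * x ^ 2 * exp (- (real (n - j) * x)))"
    using x by (intro mult_left_mono one_minus_power_exp_bounds(2)) simp_all
  also have "\<dots> = (?P * exp (real j * x)) * (real (n - j) * x ^ 2)"
    unfolding power_div_fact_mult_exp[OF n, symmetric] by (simp add: mult_ac)
  also have "\<dots> \<le> 3 * (real n * x ^ 2)"
  proof (rule mult_mono)
    show "?P * exp (real j * x) \<le> 3"
      using mult_mono[OF poi_le_1 order_trans[OF _ exp_le]] x by (simp add: poi_nonneg)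
    show "real (n - j) * x ^ 2 \<le> real n * x ^ 2"
      by (intro mult_right_mono) simp_all
  qed (simp_all add: x poi_nonneg)
  finally show ?thesis
    by (simp only: mult.assoc)
qed

lemma power_div_fact_exp_diff_le:
  assumes n: "j \<le> n" and x: "0 \<le> x" "x \<le> 1" "real j * x \<le> 1"
  shows "(real n * x) ^ j / fact j * (exp (- (real (n - j) * x)) - exp (- (real n * x)))
           \<le> 2 * real j * x"
proof -
  define q where "q = (real n * x) ^ j / fact j"
  define P where "P = poi (real n * x) j"
  have "q * exp (- (real (n - j) * x)) = P * exp (real j * x)"
    unfolding q_def P_def by (rule power_div_fact_mult_exp[OF n])
  moreover have "P = q * exp (- (real n * x))"
    by (simp add: P_def poi_def q_def)
  ultimately have "q * (exp (- (real (n - j) * x)) - exp (- (real n * x))) = P * (exp (real j * x) - 1)"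
    by (simp add: algebra_simps)
  also have "\<dots> \<le> exp (real j * x) - 1"
    using x by (intro mult_left_le_one_le) (simp_all add: P_def poi_le_1 poi_nonneg)
  also have "\<dots> \<le> 2 * real j * x"
  proof -
    have y: "0 \<le> real j * x"
      using x by simp
    show ?thesis
      using exp_bound[OF y x(3)] mult_left_le[OF x(3) y]
      unfolding power2_eq_square mult.assoc by linarith
  qed
  finally show ?thesis
    by (simp add: q_def)
qed

text \<open>With \<open>q = (n x)\<^sup>j / j!\<close> and \<open>m = n - j\<close>, the error is
  \<open>- (q - C(n,j) x\<^sup>j) (1 - x)\<^sup>m - q (exp (- m x) - (1 - x)\<^sup>m) + q (exp (- m x) - exp (- n x))\<close>,
  a combination of three nonnegative terms.\<close>

lemma binomial_poi_approx:
  assumes n: "0 < n" "j \<le> n" and x: "0 \<le> x" "x \<le> 1" "real j * x \<le> 1"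
  shows "\<bar>real (n choose j) * x ^ j * (1 - x) ^ (n - j) - poi (real n * x) j\<bar>
           \<le> 3 * real j ^ 2 * x + 2 * real j * x + 3 * real n * x ^ 2"
proof -
  define m where "m = n - j"
  define q where "q = (real n * x) ^ j / fact j"
  define C where "C = real (n choose j) * x ^ j"
  define e where "e = exp (- (real m * x))"
  have term1: "0 \<le> (q - C) * (1 - x) ^ m" "(q - C) * (1 - x) ^ m \<le> 3 * real j ^ 2 * x"
    using power_div_fact_minus_binomial_bounds(1)[OF n(2,1) x(1)] x
      binomial_coefficient_error_le[OF n x] by (simp_all add: q_def C_def m_def)
  have term2: "0 \<le> q * (e - (1 - x) ^ m)" "q * (e - (1 - x) ^ m) \<le> 3 * real n * x ^ 2"
    using one_minus_power_exp_bounds(1)[OF x(1,2)] x power_div_fact_exp_error_le[OF n(2) x]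
    by (simp_all add: q_def e_def m_def)
  have "real m * x \<le> real n * x"
    using x by (intro mult_right_mono) (simp_all add: m_def)
  then have term3: "0 \<le> q * (e - exp (- (real n * x)))"
    "q * (e - exp (- (real n * x))) \<le> 2 * real j * x"
    using x power_div_fact_exp_diff_le[OF n(2) x] by (simp_all add: q_def e_def m_def)
  have "poi (real n * x) j = q * exp (- (real n * x))"
    by (simp add: poi_def q_def)
  then have "C * (1 - x) ^ m - poi (real n * x) j
      = - ((q - C) * (1 - x) ^ m) - q * (e - (1 - x) ^ m) + q * (e - exp (- (real n * x)))"
    by (simp add: algebra_simps)
  then have "\<bar>C * (1 - x) ^ m - poi (real n * x) j\<bar>
               \<le> 3 * real j ^ 2 * x + 2 * real j * x + 3 * real n * x ^ 2"
    using term1 term2 term3 unfolding abs_le_iff by linarith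
  then show ?thesis
    by (simp add: C_def m_def)
qed

section \<open>Buckets\<close>

lemma sum_pmf_le_1: "finite A \<Longrightarrow> (\<Sum>a\<in>A. pmf p a) \<le> 1"
  by (metis measure_measure_pmf_finite measure_pmf.prob_le_1)

lemma card_le_inverse_if_pmf_ge:
  assumes "finite A" "0 < t" "\<And>a. a \<in> A \<Longrightarrow> t \<le> pmf p a"
  shows "real (card A) \<le> 1 / t"
proof -
  have "real (card A) * t \<le> (\<Sum>a\<in>A. pmf p a)"
    using assms by (intro sum_bounded_below) auto
  also have "\<dots> \<le> 1"
    using assms by (intro sum_pmf_le_1)
  finally show ?thesis
    using assms by (simp add: field_simps)
qed

definition bucket :: "'a pmf \<Rightarrow> nat \<Rightarrow> nat \<Rightarrow> 'a set" where
  "bucket p n k = {a. in_bucket n k (pmf p a)}"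

lemma in_bucket_pos:
  assumes "in_bucket n k x"
  shows "0 < x"
proof -
  have "0 \<le> real k / (real n * ln (real n) ^ 2)"
    by simp
  also have "\<dots> < x"
    using assms by (simp add: in_bucket_def)
  finally show ?thesis .
qed

lemma bucket_subset_set_pmf: "bucket p n k \<subseteq> set_pmf p"
  by (auto simp: bucket_def set_pmf_iff dest: in_bucket_pos)

lemma finite_bucket: "finite (set_pmf p) \<Longrightarrow> finite (bucket p n k)"
  by (rule finite_subset[OF bucket_subset_set_pmf])

lemma bucket_empty:
  assumes "real n * ln (real n) ^ 2 \<le> real k"
  shows "bucket p n k = {}"
proof -
  define D where "D = real n * ln (real n) ^ 2"
  have "0 \<le> D"
    by (simp add: D_def)
  have "\<not> in_bucket n k x" if "x \<le> 1" for x
  proof (cases "0 < D")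
    case True
    then have "1 \<le> real k / D"
      using assms by (simp add: D_def)
    then show ?thesis
      using that by (simp add: in_bucket_def flip: D_def)
  next
    case False
    then have "D = 0"
      using \<open>0 \<le> D\<close> by linarith
    then show ?thesis
      by (simp add: in_bucket_def flip: D_def)
  qed
  then show ?thesis
    by (auto simp: bucket_def pmf_le_1)
qed

lemma B_S_eq_sum:
  assumes "finite (set_pmf p)"
  shows "real (B_S p n S j k) = (\<Sum>a\<in>bucket p n k. of_bool (count_list S a = j))"
proof -
  have "{a. in_bucket n k (pmf p a) \<and> count_list S a = j} = {a \<in> bucket p n k. count_list S a = j}"
    by (auto simp: bucket_def)
  then have "real (B_S p n S j k) = (\<Sum>a\<in>{a \<in> bucket p n k. count_list S a = j}. 1)"
    by (simp add: B_S_def)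
  also have "\<dots> = (\<Sum>a\<in>bucket p n k. of_bool (count_list S a = j))"
    by (simp only: sum.inter_filter[OF finite_bucket[OF assms]]) (simp add: of_bool_def)
  finally show ?thesis .
qed

lemma B_poi_eq_sum:
  assumes "finite (set_pmf p)"
  shows "B_poi p n j k = (\<Sum>a\<in>bucket p n k. poi (real n * pmf p a) j)"
proof -
  define A where "A = bucket p n k"
  have A: "finite A"
    using assms by (simp add: A_def finite_bucket)
  have histogram: "histogram p x = card {a \<in> A. pmf p a = x}" if "x \<in> pmf p ` A" for x
  proof -
    have "{a. pmf p a = x} = {a \<in> A. pmf p a = x}"
      using that by (auto simp: A_def bucket_def)
    then show ?thesis
      by (simp add: histogram_def)
  qed
  have "{x. 0 < x \<and> x \<le> 1 \<and> in_bucket n k x \<and> histogram p x \<noteq> 0} = pmf p ` A"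
  proof (intro equalityI subsetI)
    fix x assume x: "x \<in> {x. 0 < x \<and> x \<le> 1 \<and> in_bucket n k x \<and> histogram p x \<noteq> 0}"
    then have "card {a. pmf p a = x} \<noteq> 0"
      by (simp add: histogram_def)
    then obtain a where "pmf p a = x"
      by (metis (mono_tags, lifting) Collect_empty_eq card.empty)
    then show "x \<in> pmf p ` A"
      using x by (auto simp: A_def bucket_def)
  next
    fix x assume x: "x \<in> pmf p ` A"
    then obtain a where a: "a \<in> A" "x = pmf p a"
      by auto
    have "0 < card {a \<in> A. pmf p a = x}"
      using A a by (auto simp: card_gt_0_iff)
    then show "x \<in> {x. 0 < x \<and> x \<le> 1 \<and> in_bucket n k x \<and> histogram p x \<noteq> 0}"
      using a histogram[OF x] by (auto simp: A_def bucket_def pmf_le_1 in_bucket_pos)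
  qed
  moreover have "(\<Sum>a\<in>A. poi (real n * pmf p a) j)
      = (\<Sum>x\<in>pmf p ` A. \<Sum>a\<in>{a \<in> A. pmf p a = x}. poi (real n * pmf p a) j)"
    by (rule sum.image_gen[OF A])
  ultimately show ?thesis
    by (simp add: B_poi_def histogram A_def)
qed

lemma expectation_B_S:
  assumes "finite (set_pmf p)"
  shows "(\<integral>S. real (B_S p n S j k) \<partial>samples n p)
           = (\<Sum>a\<in>bucket p n k. real (n choose j) * pmf p a ^ j * (1 - pmf p a) ^ (n - j))"
proof -
  have "(\<integral>S. real (B_S p n S j k) \<partial>samples n p)
      = (\<Sum>a\<in>bucket p n k. \<integral>S. indicator {S. count_list S a = j} S \<partial>samples n p)"
    using assms
    by (simp add: B_S_eq_sum indicator_def of_bool_def integrable_measure_pmf_finite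
                  finite_set_pmf_samples flip: integral_sum)
  then show ?thesis
    by (simp add: prob_count_list_eq)
qed

lemma bounded_differences_B_S:
  assumes "finite (set_pmf p)"
  shows "bounded_differences 2 (\<lambda>S. real (B_S p n S j k))"
  unfolding bounded_differences_def
proof (intro allI)
  fix us ws :: "'a list" and v w :: 'a
  let ?d = "\<lambda>a. of_bool (count_list (us @ v # ws) a = j) - of_bool (count_list (us @ w # ws) a = j) :: real"
  define A where "A = bucket p n k"
  have A: "finite A"
    using assms by (simp add: A_def finite_bucket)
  have "real (B_S p n (us @ v # ws) j k) - real (B_S p n (us @ w # ws) j k) = (\<Sum>a\<in>A. ?d a)"
    by (simp add: B_S_eq_sum[OF assms] A_def sum_subtractf)
  also have "\<dots> = (\<Sum>a\<in>A \<inter> {v, w}. ?d a)"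
    using A by (intro sum.mono_neutral_right) auto
  finally have "\<bar>real (B_S p n (us @ v # ws) j k) - real (B_S p n (us @ w # ws) j k)\<bar>
                  = \<bar>\<Sum>a\<in>A \<inter> {v, w}. ?d a\<bar>"
    by simp
  also have "\<dots> \<le> (\<Sum>a\<in>A \<inter> {v, w}. \<bar>?d a\<bar>)"
    by (rule sum_abs)
  also have "\<dots> \<le> (\<Sum>a\<in>A \<inter> {v, w}. 1)"
    by (intro sum_mono) auto
  also have "\<dots> \<le> 2"
    using card_mono[of "{v, w}" "A \<inter> {v, w}"] by (simp add: card_insert_if split: if_splits)
  finally show "\<bar>real (B_S p n (us @ v # ws) j k) - real (B_S p n (us @ w # ws) j k)\<bar> \<le> 2" .
qed

lemma binomial_poi_approx_le:
  assumes n: "0 < n" and j: "real j < L" and \<theta>: "0 < \<theta>" and L: "L * \<theta> \<le> 1" "L \<le> real n"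
    and x: "0 \<le> x" "x \<le> 1"
  shows "\<bar>real (n choose j) * x ^ j * (1 - x) ^ (n - j) - poi (real n * x) j\<bar>
           \<le> x * (3 * L\<^sup>2 + 2 * L + 3 * real n * \<theta>) + of_bool (\<theta> < x)"
proof (cases "x \<le> \<theta>")
  case True
  have "0 \<le> L"
    using j by linarith
  have "real j * x \<le> L * \<theta>"
    using j x True \<open>0 \<le> L\<close> by (intro mult_mono) auto
  then have "\<bar>real (n choose j) * x ^ j * (1 - x) ^ (n - j) - poi (real n * x) j\<bar>
               \<le> 3 * real j ^ 2 * x + 2 * real j * x + 3 * real n * x ^ 2"
    using j L n x by (intro binomial_poi_approx) auto
  also have "\<dots> \<le> 3 * L\<^sup>2 * x + 2 * L * x + 3 * real n * (\<theta> * x)"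
    using j x True \<open>0 \<le> L\<close>
    by (intro add_mono mult_right_mono mult_left_mono power_mono)
       (auto simp: power2_eq_square intro: mult_right_mono)
  finally show ?thesis
    using True by (simp add: algebra_simps)
next
  case False
  have "0 \<le> real (n choose j) * x ^ j * (1 - x) ^ (n - j)"
       "real (n choose j) * x ^ j * (1 - x) ^ (n - j) \<le> 1"
    using pmf_nonneg[of "binomial_pmf n x" j] pmf_le_1[of "binomial_pmf n x" j] x by simp_all
  moreover have "0 \<le> poi (real n * x) j" "poi (real n * x) j \<le> 1"
    using x by (simp_all add: poi_nonneg poi_le_1)
  moreover have "0 \<le> x * (3 * L\<^sup>2 + 2 * L + 3 * real n * \<theta>)"
    using j x \<theta> by (intro mult_nonneg_nonneg add_nonneg_nonneg) auto
  ultimately show ?thesis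
    using False unfolding abs_le_iff by simp
qed

lemma expectation_B_S_approx_B_poi:
  assumes p: "finite (set_pmf p)" and n: "0 < n" and j: "real j < L" and \<theta>: "0 < \<theta>"
    and L: "L * \<theta> \<le> 1" "L \<le> real n"
  shows "\<bar>(\<integral>S. real (B_S p n S j k) \<partial>samples n p) - B_poi p n j k\<bar>
           \<le> 3 * L\<^sup>2 + 2 * L + 3 * real n * \<theta> + 1 / \<theta>"
proof -
  define A where "A = bucket p n k"
  have A: "finite A"
    using p by (simp add: A_def finite_bucket)
  define K where "K = 3 * L\<^sup>2 + 2 * L + 3 * real n * \<theta>"
  have "0 \<le> K"
    using j \<theta> by (simp add: K_def)
  have "\<bar>(\<integral>S. real (B_S p n S j k) \<partial>samples n p) - B_poi p n j k\<bar>
      = \<bar>\<Sum>a\<in>A. real (n choose j) * pmf p a ^ j * (1 - pmf p a) ^ (n - j)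
                   - poi (real n * pmf p a) j\<bar>"
    by (simp add: expectation_B_S[OF p] B_poi_eq_sum[OF p] A_def sum_subtractf)
  also have "\<dots> \<le> (\<Sum>a\<in>A. pmf p a * K + of_bool (\<theta> < pmf p a))"
  proof (rule order_trans[OF sum_abs sum_mono])
    fix a
    show "\<bar>real (n choose j) * pmf p a ^ j * (1 - pmf p a) ^ (n - j) - poi (real n * pmf p a) j\<bar>
            \<le> pmf p a * K + of_bool (\<theta> < pmf p a)"
      unfolding K_def by (rule binomial_poi_approx_le[OF n j \<theta> L pmf_nonneg pmf_le_1])
  qed
  also have "\<dots> = (\<Sum>a\<in>A. pmf p a) * K + real (card (A \<inter> {a. \<theta> < pmf p a}))"
    using A by (simp add: sum.distrib sum_distrib_right)
  also have "\<dots> \<le> 1 * K + 1 / \<theta>"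
    using A \<theta> \<open>0 \<le> K\<close>
    by (intro add_mono mult_right_mono sum_pmf_le_1 card_le_inverse_if_pmf_ge[where p = p]) auto
  finally show ?thesis
    by (simp add: K_def)
qed

section \<open>Faithful samples\<close>

definition counts_concentrated :: "'a pmf \<Rightarrow> nat \<Rightarrow> real \<Rightarrow> 'a list \<Rightarrow> bool" where
  "counts_concentrated p n L S \<longleftrightarrow>
     (\<forall>a. 0 < pmf p a \<longrightarrow>
        \<bar>real n * pmf p a - real (count_list S a)\<bar> < max L (sqrt (real n * pmf p a * L)))"

definition bucket_counts_close :: "'a pmf \<Rightarrow> nat \<Rightarrow> real \<Rightarrow> real \<Rightarrow> 'a list \<Rightarrow> bool" where
  "bucket_counts_close p n J \<epsilon> S \<longleftrightarrow>
     (\<forall>j k. real j < J \<longrightarrow> \<bar>B_poi p n j k - real (B_S p n S j k)\<bar> < \<epsilon>)"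

lemma faithful_iff:
  "faithful p n S \<longleftrightarrow>
     counts_concentrated p n (ln (real n) powr 1.5) S \<and>
     bucket_counts_close p n ((ln (real n))\<^sup>2) (real n powr 0.6) S"
  by (simp add: faithful_def counts_concentrated_def bucket_counts_close_def)

lemma prob_rare_overcounted:
  assumes p: "finite (set_pmf p)" and L: "0 < L"
  shows "measure_pmf.prob (samples n p)
           (\<Union>a\<in>{a \<in> set_pmf p. real n * pmf p a \<le> 1/2}. {S. L \<le> real (count_list S a)})
         \<le> 4 * real n / (exp L - 1)"
proof -
  define A where "A = {a \<in> set_pmf p. real n * pmf p a \<le> 1/2}"
  have A: "finite A"
    using p by (simp add: A_def)
  have "measure_pmf.prob (samples n p) (\<Union>a\<in>A. {S. L \<le> real (count_list S a)})
      \<le> (\<Sum>a\<in>A. measure_pmf.prob (samples n p) {S. L \<le> real (count_list S a)})"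
    using A by (intro measure_pmf.finite_measure_subadditive_finite) auto
  also have "\<dots> \<le> (\<Sum>a\<in>A. 4 * real n / (exp L - 1) * pmf p a)"
    using p L by (intro sum_mono order_trans[OF prob_count_list_ge_rare]) (auto simp: A_def)
  also have "\<dots> = 4 * real n / (exp L - 1) * (\<Sum>a\<in>A. pmf p a)"
    by (simp only: sum_distrib_left)
  also have "\<dots> \<le> 4 * real n / (exp L - 1) * 1"
    using A L by (intro mult_left_mono sum_pmf_le_1) auto
  finally show ?thesis
    by (simp add: A_def)
qed

lemma prob_frequent_deviating:
  assumes p: "finite (set_pmf p)" and L: "0 < L"
  shows "measure_pmf.prob (samples n p)
           (\<Union>a\<in>{a \<in> set_pmf p. 1/2 < real n * pmf p a}.
              {S. max L (sqrt (real n * pmf p a * L)) \<le> \<bar>real n * pmf p a - real (count_list S a)\<bar>})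
         \<le> 4 * real n * exp (- L / 4)"
proof -
  define A where "A = {a \<in> set_pmf p. 1/2 < real n * pmf p a}"
  have A: "finite A"
    using p by (simp add: A_def)
  have "measure_pmf.prob (samples n p)
          (\<Union>a\<in>A. {S. max L (sqrt (real n * pmf p a * L)) \<le> \<bar>real n * pmf p a - real (count_list S a)\<bar>})
      \<le> (\<Sum>a\<in>A. measure_pmf.prob (samples n p)
          {S. max L (sqrt (real n * pmf p a * L)) \<le> \<bar>real n * pmf p a - real (count_list S a)\<bar>})"
    using A by (intro measure_pmf.finite_measure_subadditive_finite) auto
  also have "\<dots> \<le> (\<Sum>a\<in>A. 2 * exp (- L / 4))"
  proof (intro sum_mono prob_count_list_deviation_ge[OF p refl])
    fix a assume "a \<in> A"
    then show "0 < real n * pmf p a"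
      by (auto simp: A_def)
    have nonneg: "0 \<le> real n * pmf p a * L"
      using \<open>0 < real n * pmf p a\<close> L by (intro mult_nonneg_nonneg) auto
    then have "real n * pmf p a * L = (sqrt (real n * pmf p a * L))\<^sup>2"
      by (rule real_sqrt_pow2[symmetric])
    also have "\<dots> \<le> (max L (sqrt (real n * pmf p a * L)))\<^sup>2"
      using nonneg by (intro power_mono) auto
    finally show "real n * pmf p a * L \<le> (max L (sqrt (real n * pmf p a * L)))\<^sup>2" .
  qed (use L in auto)
  also have "\<dots> \<le> 2 * real n * (2 * exp (- L / 4))"
  proof (cases "n = 0")
    case True
    then show ?thesis
      by (simp add: A_def)
  next
    case False
    have "real (card A) \<le> 1 / (1 / (2 * real n))"
      using A False by (intro card_le_inverse_if_pmf_ge[where p = p]) (auto simp: A_def field_simps)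
    then show ?thesis
      by (simp add: mult_right_mono)
  qed
  finally show ?thesis
    by (simp add: A_def)
qed

lemma not_counts_concentrated_witness:
  assumes "\<not> counts_concentrated p n L S" and L: "1/2 < L"
  obtains a where "a \<in> set_pmf p" "real n * pmf p a \<le> 1/2" "L \<le> real (count_list S a)"
    | a where "a \<in> set_pmf p" "1/2 < real n * pmf p a"
        "max L (sqrt (real n * pmf p a * L)) \<le> \<bar>real n * pmf p a - real (count_list S a)\<bar>"
proof -
  obtain a where a: "0 < pmf p a"
    "max L (sqrt (real n * pmf p a * L)) \<le> \<bar>real n * pmf p a - real (count_list S a)\<bar>"
    using assms(1) by (auto simp: counts_concentrated_def not_less)
  then have "a \<in> set_pmf p"
    by (simp add: set_pmf_iff)
  show thesis
  proof (cases "real n * pmf p a \<le> 1/2")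
    case True
    have "L \<le> \<bar>real n * pmf p a - real (count_list S a)\<bar>"
      using a(2) by simp
    moreover have "0 \<le> real n * pmf p a"
      by simp
    ultimately have "L \<le> real (count_list S a)"
      using True L by arith
    then show thesis
      using that(1) True \<open>a \<in> set_pmf p\<close> by blast
  next
    case False
    then show thesis
      using that(2) a(2) \<open>a \<in> set_pmf p\<close> by simp
  qed
qed

lemma prob_not_counts_concentrated:
  assumes p: "finite (set_pmf p)" and L: "1/2 < L"
  shows "measure_pmf.prob (samples n p) {S. \<not> counts_concentrated p n L S}
           \<le> 4 * real n / (exp L - 1) + 4 * real n * exp (- L / 4)"
proof -
  let ?P = "measure_pmf.prob (samples n p)"
  define rare where
    "rare = (\<Union>a\<in>{a \<in> set_pmf p. real n * pmf p a \<le> 1/2}. {S. L \<le> real (count_list S a)})"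
  define frequent where
    "frequent = (\<Union>a\<in>{a \<in> set_pmf p. 1/2 < real n * pmf p a}.
       {S. max L (sqrt (real n * pmf p a * L)) \<le> \<bar>real n * pmf p a - real (count_list S a)\<bar>})"
  have "{S. \<not> counts_concentrated p n L S} \<subseteq> rare \<union> frequent"
    by (auto simp: rare_def frequent_def elim!: not_counts_concentrated_witness[OF _ L])
  then have "?P {S. \<not> counts_concentrated p n L S} \<le> ?P rare + ?P frequent"
    by (intro order_trans[OF measure_pmf.finite_measure_mono measure_Un_le]) auto
  also have "\<dots> \<le> 4 * real n / (exp L - 1) + 4 * real n * exp (- L / 4)"
    unfolding rare_def frequent_def using L
    by (intro add_mono prob_rare_overcounted prob_frequent_deviating p) auto
  finally show ?thesis .
qed

lemma not_bucket_counts_close_witness: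
  assumes p: "finite (set_pmf p)" and "\<not> bucket_counts_close p n J (2 * t) S" and t: "0 < t"
    and close: "\<And>j k. real j < J \<Longrightarrow>
                  \<bar>(\<integral>S. real (B_S p n S j k) \<partial>samples n p) - B_poi p n j k\<bar> \<le> t"
  obtains j k where "real j < J" "real k < real n * ln (real n) ^ 2"
    "t \<le> \<bar>real (B_S p n S j k) - (\<integral>S. real (B_S p n S j k) \<partial>samples n p)\<bar>"
proof -
  obtain j k where jk: "real j < J" "2 * t \<le> \<bar>B_poi p n j k - real (B_S p n S j k)\<bar>"
    using assms(2) by (auto simp: bucket_counts_close_def not_less)
  have "real k < real n * ln (real n) ^ 2"
  proof (rule ccontr)
    assume "\<not> real k < real n * ln (real n) ^ 2"
    then have "bucket p n k = {}"
      by (intro bucket_empty) simp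
    then show False
      using jk(2) t by (simp add: B_poi_eq_sum[OF p] B_S_eq_sum[OF p])
  qed
  moreover have "t \<le> \<bar>real (B_S p n S j k) - (\<integral>S. real (B_S p n S j k) \<partial>samples n p)\<bar>"
    using jk(2) close[OF jk(1), of k] by simp
  ultimately show thesis
    using that jk(1) by blast
qed

lemma prob_not_bucket_counts_close:
  assumes p: "finite (set_pmf p)" and n: "0 < n" and t: "0 < t" and J: "0 \<le> J"
    and close: "\<And>j k. real j < J \<Longrightarrow>
                  \<bar>(\<integral>S. real (B_S p n S j k) \<partial>samples n p) - B_poi p n j k\<bar> \<le> t"
  shows "measure_pmf.prob (samples n p) {S. \<not> bucket_counts_close p n J (2 * t) S}
           \<le> (J + 1) * (real n * ln (real n) ^ 2 + 1) * (2 * exp (- t\<^sup>2 / (2 * real n)))"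
proof -
  let ?P = "measure_pmf.prob (samples n p)"
  define D where "D = real n * ln (real n) ^ 2"
  have "0 \<le> D"
    by (simp add: D_def)
  define I where "I = {..<nat \<lceil>J\<rceil>} \<times> {..<nat \<lceil>D\<rceil>}"
  define f where "f jk S = real (B_S p n S (fst jk) (snd jk))" for jk S
  define dev where "dev jk = {S. t \<le> \<bar>f jk S - (\<integral>T. f jk T \<partial>samples n p)\<bar>}" for jk
  have "{S. \<not> bucket_counts_close p n J (2 * t) S} \<subseteq> (\<Union>jk\<in>I. dev jk)"
  proof
    fix S assume "S \<in> {S. \<not> bucket_counts_close p n J (2 * t) S}"
    then obtain j k where jk: "real j < J" "real k < D"
      "t \<le> \<bar>real (B_S p n S j k) - (\<integral>S. real (B_S p n S j k) \<partial>samples n p)\<bar>"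
      using not_bucket_counts_close_witness[OF p _ t close] unfolding D_def by blast
    have "(j, k) \<in> I"
      using jk(1,2) unfolding I_def by (simp, linarith)
    moreover have "S \<in> dev (j, k)"
      using jk(3) by (simp add: dev_def f_def)
    ultimately show "S \<in> (\<Union>jk\<in>I. dev jk)"
      by blast
  qed
  then have "?P {S. \<not> bucket_counts_close p n J (2 * t) S} \<le> (\<Sum>jk\<in>I. ?P (dev jk))"
    by (intro order_trans[OF measure_pmf.finite_measure_mono
          measure_pmf.finite_measure_subadditive_finite]) (auto simp: I_def)
  also have "\<dots> \<le> (\<Sum>jk\<in>I. 2 * exp (- t\<^sup>2 / (2 * real n)))"
    using McDiarmid_ineq_abs_ge[OF p bounded_differences_B_S[OF p] _ n t] n
    by (intro sum_mono) (simp add: dev_def f_def)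
  also have "\<dots> = real (nat \<lceil>J\<rceil>) * real (nat \<lceil>D\<rceil>) * (2 * exp (- t\<^sup>2 / (2 * real n)))"
    by (simp add: I_def card_cartesian_product)
  also have "\<dots> \<le> (J + 1) * (D + 1) * (2 * exp (- t\<^sup>2 / (2 * real n)))"
    using J \<open>0 \<le> D\<close> by (intro mult_right_mono mult_mono) auto
  finally show ?thesis
    by (simp add: D_def)
qed

definition faithful_failure_bound :: "nat \<Rightarrow> real" where
  "faithful_failure_bound n =
     4 * real n / (exp (ln (real n) powr 1.5) - 1) + 4 * real n * exp (- (ln (real n) powr 1.5) / 4)
     + ((ln (real n))\<^sup>2 + 1) * (real n * ln (real n) ^ 2 + 1)
         * (2 * exp (- (real n powr 0.6 / 2)\<^sup>2 / (2 * real n)))"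

text \<open>The threshold \<open>n powr -0.45\<close> for the Poisson approximation balances its error
  \<open>3 n \<theta>\<close> against the number \<open>1 / \<theta>\<close> of heavier elements in a bucket.\<close>

lemma prob_faithful_ge:
  fixes p :: "'a pmf"
  assumes p: "finite (set_pmf p)" and n: "0 < n" and L: "1/2 < ln (real n) powr 1.5"
    and J: "(ln (real n))\<^sup>2 * real n powr (-0.45) \<le> 1" "(ln (real n))\<^sup>2 \<le> real n"
    and t: "3 * ((ln (real n))\<^sup>2)\<^sup>2 + 2 * (ln (real n))\<^sup>2 + 3 * real n * real n powr (-0.45)
              + 1 / real n powr (-0.45) \<le> real n powr 0.6 / 2"
  shows "1 - faithful_failure_bound n \<le> measure_pmf.prob (samples n p) {S. faithful p n S}"
proof -
  let ?P = "measure_pmf.prob (samples n p)" and ?t = "real n powr 0.6 / 2"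
  have close: "\<bar>(\<integral>S. real (B_S p n S j k) \<partial>samples n p) - B_poi p n j k\<bar> \<le> ?t"
    if "real j < (ln (real n))\<^sup>2" for j k
  proof -
    have "\<bar>(\<integral>S. real (B_S p n S j k) \<partial>samples n p) - B_poi p n j k\<bar>
        \<le> 3 * ((ln (real n))\<^sup>2)\<^sup>2 + 2 * (ln (real n))\<^sup>2 + 3 * real n * real n powr (-0.45)
            + 1 / real n powr (-0.45)"
      using n by (intro expectation_B_S_approx_B_poi[OF p n that _ J]) simp
    then show ?thesis
      using t by linarith
  qed
  have "{S. \<not> faithful p n S} \<subseteq> {S. \<not> counts_concentrated p n (ln (real n) powr 1.5) S}
          \<union> {S. \<not> bucket_counts_close p n ((ln (real n))\<^sup>2) (2 * ?t) S}"
    by (auto simp: faithful_iff)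
  then have "?P {S. \<not> faithful p n S}
      \<le> ?P {S. \<not> counts_concentrated p n (ln (real n) powr 1.5) S}
         + ?P {S. \<not> bucket_counts_close p n ((ln (real n))\<^sup>2) (2 * ?t) S}"
    by (intro order_trans[OF measure_pmf.finite_measure_mono measure_Un_le]) auto
  also have "\<dots> \<le> faithful_failure_bound n"
    unfolding faithful_failure_bound_def
    using n L by (intro add_mono prob_not_counts_concentrated prob_not_bucket_counts_close p close) auto
  finally have "?P {S. \<not> faithful p n S} \<le> faithful_failure_bound n" .
  moreover have "{S. \<not> faithful p n S} = UNIV - {S. faithful p n S}"
    by auto
  ultimately show ?thesis
    using measure_pmf.prob_compl[of "{S. faithful p n S}" "samples n p"] by simp
qed

lemma eventually_prob_faithful_ge:
  "\<forall>\<^sub>F n in sequentially. \<forall>p :: 'a pmf. finite (set_pmf p) \<longrightarrow>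
     1 - faithful_failure_bound n \<le> measure_pmf.prob (samples n p) {S. faithful p n S}"
proof -
  have "\<forall>\<^sub>F n in sequentially. 0 < n \<and> 1/2 < ln (real n) powr 1.5
          \<and> (ln (real n))\<^sup>2 * real n powr (-0.45) \<le> 1 \<and> (ln (real n))\<^sup>2 \<le> real n
          \<and> 3 * ((ln (real n))\<^sup>2)\<^sup>2 + 2 * (ln (real n))\<^sup>2 + 3 * real n * real n powr (-0.45)
              + 1 / real n powr (-0.45) \<le> real n powr 0.6 / 2"
    by (intro eventually_conj eventually_gt_at_top) real_asymp+
  then show ?thesis
    by eventually_elim (blast intro: prob_faithful_ge)
qed

lemma faithful_failure_bound_tendsto_zero:
  "0 < c \<Longrightarrow> (\<lambda>n. real n powr c * faithful_failure_bound n) \<longlonglongrightarrow> 0"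
  unfolding faithful_failure_bound_def by real_asymp

theorem lemma2:
  "\<exists>\<delta> :: nat \<Rightarrow> real.
     (\<forall>c::real. c > 0 \<longrightarrow> ((\<lambda>n. real n powr c * \<delta> n) \<longlonglongrightarrow> 0)) \<and>
     (\<forall>(p :: nat pmf) (n :: nat). finite (set_pmf p) \<longrightarrow>
        measure_pmf.prob (samples n p) {S. faithful p n S} \<ge> 1 - \<delta> n)"
proof -
  obtain N where N: "\<And>n p :: nat pmf. N \<le> n \<Longrightarrow> finite (set_pmf p) \<Longrightarrow>
      1 - faithful_failure_bound n \<le> measure_pmf.prob (samples n p) {S. faithful p n S}"
    using eventually_prob_faithful_ge unfolding eventually_sequentially by blast
  define \<delta> where "\<delta> n = (if N \<le> n then faithful_failure_bound n else 1)" for n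
  have "(\<lambda>n. real n powr c * \<delta> n) \<longlonglongrightarrow> 0" if "0 < c" for c
  proof (rule Lim_transform_eventually[OF faithful_failure_bound_tendsto_zero[OF that]])
    show "\<forall>\<^sub>F n in sequentially. real n powr c * faithful_failure_bound n = real n powr c * \<delta> n"
      using eventually_ge_at_top[of N] by eventually_elim (simp add: \<delta>_def)
  qed
  moreover have "1 - \<delta> n \<le> measure_pmf.prob (samples n p) {S. faithful p n S}"
    if "finite (set_pmf p)" for p :: "nat pmf" and n
    using N[OF _ that] by (simp add: \<delta>_def)
  ultimately show ?thesis
    by blast
qed

end
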